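(* Let $A\to M$, $B\to M$ be Lie algebroids, $(\nabla^{AB},\nabla^{AC},R_A)$ a 2-representation of $A$ on $\partial_B\colon C\to B$ and $(\nabla^{BA},\nabla^{BC},R_B)$ a 2-representation of $B$ on $\partial_A\colon C\to A$ forming a matched pair. Then $C$ is a Lie algebroid with anchor $\rho_C:=\rho_A\circ\partial_A=\rho_B\circ\partial_B$ and bracket $[c_1,c_2]=\nabla_{\partial_Ac_1}c_2-\nabla_{\partial_Bc_2}c_1$, and $\partial_A\colon C\to A$ and $\partial_B\colon C\to B$ are Lie algebroid morphisms.
   Context: A 2-representation of a Lie algebroid $A$ on a complex $\partial_B\colon C\to B$ is a triple $(\nabla^{AB},\nabla^{AC},R_A)$: $A$-connections on $B$ and $C$ with $\partial_B\circ\nabla^{AC}=\nabla^{AB}\circ\partial_B$, and $R_A\in\Omega^2(A,\mathrm{Hom}(B,C))$ with $R_{\nabla^{AC}}=R_A\circ\partial_B$, $R_{\nabla^{AB}}=\partial_B\circ R_A$, $\mathrm d_{\nabla^{\mathrm{Hom}}}R_A=0$. Similarly for $B$ on $\partial_A\colon C\to A$ with $R_B\in\Omega^2(B,\mathrm{Hom}(A,C))$. Writing $\nabla$ for all four connections, they form a matched pair if for all $a,a_i\in\Gamma(A)$, $b,b_i\in\Gamma(B)$, $c,c_i\in\Gamma(C)$: (M1) $\rho_A\partial_A=\rho_B\partial_B$; (M2) $\nabla_{\partial_Ac_1}c_2-\nabla_{\partial_Bc_2}c_1=-\nabla_{\partial_Ac_2}c_1+\nabla_{\partial_Bc_1}c_2$;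 (M3) $[a,\partial_Ac]=\partial_A(\nabla_ac)-\nabla_{\partial_Bc}a$; (M4) $[b,\partial_Bc]=\partial_B(\nabla_bc)-\nabla_{\partial_Ac}b$; (M5) $[\rho_A(a),\rho_B(b)]=\rho_B(\nabla_ab)-\rho_A(\nabla_ba)$; (M6) $\nabla_b\nabla_ac-\nabla_a\nabla_bc-\nabla_{\nabla_ba}c+\nabla_{\nabla_ab}c=R_B(b,\partial_Bc)a-R_A(a,\partial_Ac)b$; (M7) $\partial_A(R_A(a_1,a_2)b)=-\nabla_b[a_1,a_2]+[\nabla_ba_1,a_2]+[a_1,\nabla_ba_2]+\nabla_{\nabla_{a_2}b}a_1-\nabla_{\nabla_{a_1}b}a_2$; (M8) $\partial_B(R_B(b_1,b_2)a)=-\nabla_a[b_1,b_2]+[\nabla_ab_1,b_2]+[b_1,\nabla_ab_2]+\nabla_{\nabla_{b_2}a}b_1-\nabla_{\nabla_{b_1}a}b_2$; (M9) $\mathrm d_{\nabla^A}R_B=\mathrm d_{\nabla^B}R_A$, where $R_B$ is viewed in $\Omega^1(A,\wedge^2B^*\otimes C)$ via $a\mapsto((b_1,b_2)\mapsto R_B(b_1,b_2)a)$, $R_A$ in $\Omega^1(B,\wedge^2A^*\otimes C)$ likewise, $\nabla^A,\nabla^B$ the induced connections on $\wedge^2B^*\otimes C$, $\wedge^2A^*\otimes C$, and $\Omega^2(A,\wedge^2B^*\otimes C)\cong\Omega^2(B,\wedge^2A^*\otimes C)$ via $\omega(a_1,a_2)(b_1,b_2)=\omega'(b_1,b_2)(a_1,a_2)$.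 *)

theory Defs
  imports Main "HOL.Real_Vector_Spaces"
begin

text \<open>Algebraic (Lie--Rinehart / section-level) model of Lie algebroids over a common base M.
  The type 'r plays the role of the smooth functions C-infinity(M) (a commutative real algebra);
  the space of sections of a vector bundle E is a type 'e with a module structure over 'r.
  Vector fields are real-linear derivations of 'r.\<close>

definition module_over :: "('r::comm_ring_1 \<Rightarrow> 'e::ab_group_add \<Rightarrow> 'e) \<Rightarrow> bool" where
  "module_over sm \<longleftrightarrow>
     (\<forall>f x y. sm f (x + y) = sm f x + sm f y) \<and>
     (\<forall>f g x. sm (f + g) x = sm f x + sm g x) \<and>
     (\<forall>f g x. sm (f * g) x = sm f (sm g x)) \<and>
     (\<forall>x. sm 1 x = x)"

definition is_vector_field :: "('r::{comm_ring_1,real_algebra_1} \<Rightarrow> 'r) \<Rightarrow> bool" where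
  "is_vector_field D \<longleftrightarrow>
     (\<forall>f g. D (f + g) = D f + D g) \<and>
     (\<forall>(c::real) f. D (c *\<^sub>R f) = c *\<^sub>R D f) \<and>
     (\<forall>f g. D (f * g) = f * D g + D f * g)"

definition vf_bracket :: "('r::ring \<Rightarrow> 'r) \<Rightarrow> ('r \<Rightarrow> 'r) \<Rightarrow> ('r \<Rightarrow> 'r)" where
  "vf_bracket X Y = (\<lambda>f. X (Y f) - Y (X f))"

text \<open>R-linear maps between section spaces (vector bundle morphisms over the identity).\<close>
definition module_hom ::
  "('r::comm_ring_1 \<Rightarrow> 'e::ab_group_add \<Rightarrow> 'e) \<Rightarrow> ('r \<Rightarrow> 'f::ab_group_add \<Rightarrow> 'f) \<Rightarrow> ('e \<Rightarrow> 'f) \<Rightarrow> bool" where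
  "module_hom smE smF phi \<longleftrightarrow>
     (\<forall>x y. phi (x + y) = phi x + phi y) \<and> (\<forall>f x. phi (smE f x) = smF f (phi x))"

definition lie_algebroid ::
  "('r::{comm_ring_1,real_algebra_1} \<Rightarrow> 'e::ab_group_add \<Rightarrow> 'e) \<Rightarrow> ('e \<Rightarrow> 'r \<Rightarrow> 'r) \<Rightarrow> ('e \<Rightarrow> 'e \<Rightarrow> 'e) \<Rightarrow> bool" where
  "lie_algebroid sm anchor brk \<longleftrightarrow>
     module_over sm \<and>
     (\<forall>e. is_vector_field (anchor e)) \<and>
     (\<forall>e1 e2 f. anchor (e1 + e2) f = anchor e1 f + anchor e2 f) \<and>
     (\<forall>g e f. anchor (sm g e) f = g * anchor e f) \<and>
     (\<forall>e1 e2 e3. brk (e1 + e2) e3 = brk e1 e3 + brk e2 e3) \<and>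
     (\<forall>e1 e2. brk e1 e2 = - brk e2 e1) \<and>
     (\<forall>e1 e2 e3. brk e1 (brk e2 e3) = brk (brk e1 e2) e3 + brk e2 (brk e1 e3)) \<and>
     (\<forall>e1 e2 f. brk e1 (sm f e2) = sm f (brk e1 e2) + sm (anchor e1 f) e2) \<and>
     (\<forall>e1 e2. anchor (brk e1 e2) = vf_bracket (anchor e1) (anchor e2))"

definition is_connection ::
  "('r::comm_ring_1 \<Rightarrow> 'a::ab_group_add \<Rightarrow> 'a) \<Rightarrow> ('a \<Rightarrow> 'r \<Rightarrow> 'r) \<Rightarrow>
   ('r \<Rightarrow> 'v::ab_group_add \<Rightarrow> 'v) \<Rightarrow> ('a \<Rightarrow> 'v \<Rightarrow> 'v) \<Rightarrow> bool" where
  "is_connection smA anchorA smV nabla \<longleftrightarrow>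
     (\<forall>a1 a2 v. nabla (a1 + a2) v = nabla a1 v + nabla a2 v) \<and>
     (\<forall>f a v. nabla (smA f a) v = smV f (nabla a v)) \<and>
     (\<forall>a v1 v2. nabla a (v1 + v2) = nabla a v1 + nabla a v2) \<and>
     (\<forall>a f v. nabla a (smV f v) = smV f (nabla a v) + smV (anchorA a f) v)"

definition curvature ::
  "('a \<Rightarrow> 'a \<Rightarrow> 'a) \<Rightarrow> ('a \<Rightarrow> 'v::ab_group_add \<Rightarrow> 'v) \<Rightarrow> 'a \<Rightarrow> 'a \<Rightarrow> 'v \<Rightarrow> 'v" where
  "curvature brkA nabla a1 a2 v = nabla a1 (nabla a2 (v)) - nabla a2 (nabla a1 v) - nabla (brkA a1 a2) v"

text \<open>Elements of Omega^2(A, Hom(B,C)): maps A x A x B -> C that are R-linear in each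
  argument and alternating in the two A-arguments.\<close>
definition is_hom_2form ::
  "('r::comm_ring_1 \<Rightarrow> 'a::ab_group_add \<Rightarrow> 'a) \<Rightarrow> ('r \<Rightarrow> 'b::ab_group_add \<Rightarrow> 'b) \<Rightarrow>
   ('r \<Rightarrow> 'c::ab_group_add \<Rightarrow> 'c) \<Rightarrow> ('a \<Rightarrow> 'a \<Rightarrow> 'b \<Rightarrow> 'c) \<Rightarrow> bool" where
  "is_hom_2form smA smB smC \<omega> \<longleftrightarrow>
     (\<forall>a1 a1' a2 b. \<omega> (a1 + a1') a2 b = \<omega> a1 a2 b + \<omega> a1' a2 b) \<and>
     (\<forall>f a1 a2 b. \<omega> (smA f a1) a2 b = smC f (\<omega> a1 a2 b)) \<and>
     (\<forall>a1 a2 a2' b. \<omega> a1 (a2 + a2') b = \<omega> a1 a2 b + \<omega> a1 a2' b) \<and>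
     (\<forall>f a1 a2 b. \<omega> a1 (smA f a2) b = smC f (\<omega> a1 a2 b)) \<and>
     (\<forall>a1 a2 b b'. \<omega> a1 a2 (b + b') = \<omega> a1 a2 b + \<omega> a1 a2 b') \<and>
     (\<forall>f a1 a2 b. \<omega> a1 a2 (smB f b) = smC f (\<omega> a1 a2 b)) \<and>
     (\<forall>a b. \<omega> a a b = 0)"

text \<open>Exterior covariant derivative d_{nabla^Hom} of omega in Omega^2(A,Hom(B,C)), where
  (nabla^Hom_a phi)(b) = nabla^{AC}_a (phi b) - phi (nabla^{AB}_a b); evaluated at (a1,a2,a3) and b.\<close>
definition d_hom_2form ::
  "('a \<Rightarrow> 'a \<Rightarrow> 'a) \<Rightarrow> ('a \<Rightarrow> 'b \<Rightarrow> 'b) \<Rightarrow> ('a \<Rightarrow> 'c::ab_group_add \<Rightarrow> 'c) \<Rightarrow>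
   ('a \<Rightarrow> 'a \<Rightarrow> 'b \<Rightarrow> 'c) \<Rightarrow> 'a \<Rightarrow> 'a \<Rightarrow> 'a \<Rightarrow> 'b \<Rightarrow> 'c" where
  "d_hom_2form brkA nAB nAC \<omega> a1 a2 a3 b =
     (let nH = (\<lambda>a \<phi> b. nAC a (\<phi> b) - \<phi> (nAB a b)) in
        nH a1 (\<omega> a2 a3) b - nH a2 (\<omega> a1 a3) b + nH a3 (\<omega> a1 a2) b
      - \<omega> (brkA a1 a2) a3 b + \<omega> (brkA a1 a3) a2 b - \<omega> (brkA a2 a3) a1 b)"

definition two_representation ::
  "('r::{comm_ring_1,real_algebra_1} \<Rightarrow> 'a::ab_group_add \<Rightarrow> 'a) \<Rightarrow> ('a \<Rightarrow> 'r \<Rightarrow> 'r) \<Rightarrow> ('a \<Rightarrow> 'a \<Rightarrow> 'a) \<Rightarrow>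
   ('r \<Rightarrow> 'b::ab_group_add \<Rightarrow> 'b) \<Rightarrow> ('r \<Rightarrow> 'c::ab_group_add \<Rightarrow> 'c) \<Rightarrow> ('c \<Rightarrow> 'b) \<Rightarrow>
   ('a \<Rightarrow> 'b \<Rightarrow> 'b) \<Rightarrow> ('a \<Rightarrow> 'c \<Rightarrow> 'c) \<Rightarrow> ('a \<Rightarrow> 'a \<Rightarrow> 'b \<Rightarrow> 'c) \<Rightarrow> bool" where
  "two_representation smA anchorA brkA smB smC dB nAB nAC RA \<longleftrightarrow>
     module_over smB \<and> module_over smC \<and> module_hom smC smB dB \<and>
     is_connection smA anchorA smB nAB \<and> is_connection smA anchorA smC nAC \<and>
     (\<forall>a c. dB (nAC a c) = nAB a (dB c)) \<and>
     is_hom_2form smA smB smC RA \<and>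
     (\<forall>a1 a2 c. curvature brkA nAC a1 a2 c = RA a1 a2 (dB c)) \<and>
     (\<forall>a1 a2 b. curvature brkA nAB a1 a2 b = dB (RA a1 a2 b)) \<and>
     (\<forall>a1 a2 a3 b. d_hom_2form brkA nAB nAC RA a1 a2 a3 b = 0)"

text \<open>d_{nabla^A} R_B evaluated at (a1,a2)(b1,b2), where R_B is regarded as the 1-form
  a |-> ((b1,b2) |-> R_B(b1,b2)a) with values in wedge^2 B^* (x) C and nabla^A is the induced
  A-connection (nabla_a psi)(b1,b2) = nabla^{AC}_a (psi(b1,b2)) - psi(nabla_a b1,b2) - psi(b1,nabla_a b2).\<close>
definition d_dual_form ::
  "('a \<Rightarrow> 'a \<Rightarrow> 'a) \<Rightarrow> ('a \<Rightarrow> 'b \<Rightarrow> 'b) \<Rightarrow> ('a \<Rightarrow> 'c::ab_group_add \<Rightarrow> 'c) \<Rightarrow>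
   ('b \<Rightarrow> 'b \<Rightarrow> 'a \<Rightarrow> 'c) \<Rightarrow> 'a \<Rightarrow> 'a \<Rightarrow> 'b \<Rightarrow> 'b \<Rightarrow> 'c" where
  "d_dual_form brkA nAB nAC RB a1 a2 b1 b2 =
     (let \<omega> = (\<lambda>a b1 b2. RB b1 b2 a);
          nW = (\<lambda>a \<psi> b1 b2. nAC a (\<psi> b1 b2) - \<psi> (nAB a b1) b2 - \<psi> b1 (nAB a b2)) in
        nW a1 (\<omega> a2) b1 b2 - nW a2 (\<omega> a1) b1 b2 - \<omega> (brkA a1 a2) b1 b2)"

text \<open>Matched pair conditions (M1)-(M9).\<close>
definition matched_pair ::
  "('a \<Rightarrow> 'r \<Rightarrow> 'r::{comm_ring_1,real_algebra_1}) \<Rightarrow> ('a \<Rightarrow> 'a \<Rightarrow> 'a::ab_group_add) \<Rightarrow>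
   ('b \<Rightarrow> 'r \<Rightarrow> 'r) \<Rightarrow> ('b \<Rightarrow> 'b \<Rightarrow> 'b::ab_group_add) \<Rightarrow>
   ('c::ab_group_add \<Rightarrow> 'a) \<Rightarrow> ('c \<Rightarrow> 'b) \<Rightarrow>
   ('a \<Rightarrow> 'b \<Rightarrow> 'b) \<Rightarrow> ('a \<Rightarrow> 'c \<Rightarrow> 'c) \<Rightarrow> ('a \<Rightarrow> 'a \<Rightarrow> 'b \<Rightarrow> 'c) \<Rightarrow>
   ('b \<Rightarrow> 'a \<Rightarrow> 'a) \<Rightarrow> ('b \<Rightarrow> 'c \<Rightarrow> 'c) \<Rightarrow> ('b \<Rightarrow> 'b \<Rightarrow> 'a \<Rightarrow> 'c) \<Rightarrow> bool" where
  "matched_pair anchorA brkA anchorB brkB dA dB nAB nAC RA nBA nBC RB \<longleftrightarrow>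
     (\<forall>c. anchorA (dA c) = anchorB (dB c)) \<and>
     (\<forall>c1 c2. nAC (dA c1) c2 - nBC (dB c2) c1 = - nAC (dA c2) c1 + nBC (dB c1) c2) \<and>
     (\<forall>a c. brkA a (dA c) = dA (nAC a c) - nBA (dB c) a) \<and>
     (\<forall>b c. brkB b (dB c) = dB (nBC b c) - nAB (dA c) b) \<and>
     (\<forall>a b. vf_bracket (anchorA a) (anchorB b) = (\<lambda>f. anchorB (nAB a b) f - anchorA (nBA b a) f)) \<and>
     (\<forall>a b c. nBC b (nAC a c) - nAC a (nBC b c) - nAC (nBA b a) c + nBC (nAB a b) c
                = RB b (dB c) a - RA a (dA c) b) \<and>
     (\<forall>a1 a2 b. dA (RA a1 a2 b) = - nBA b (brkA a1 a2) + brkA (nBA b a1) a2 + brkA a1 (nBA b a2)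
                                   + nBA (nAB a2 b) a1 - nBA (nAB a1 b) a2) \<and>
     (\<forall>b1 b2 a. dB (RB b1 b2 a) = - nAB a (brkB b1 b2) + brkB (nAB a b1) b2 + brkB b1 (nAB a b2)
                                   + nAB (nBA b2 a) b1 - nAB (nBA b1 a) b2) \<and>
     (\<forall>a1 a2 b1 b2. d_dual_form brkA nAB nAC RB a1 a2 b1 b2 = d_dual_form brkB nBA nBC RA b1 b2 a1 a2)"

definition lie_algebroid_morphism ::
  "('r::comm_ring_1 \<Rightarrow> 'e::ab_group_add \<Rightarrow> 'e) \<Rightarrow> ('e \<Rightarrow> 'r \<Rightarrow> 'r) \<Rightarrow> ('e \<Rightarrow> 'e \<Rightarrow> 'e) \<Rightarrow>
   ('r \<Rightarrow> 'f::ab_group_add \<Rightarrow> 'f) \<Rightarrow> ('f \<Rightarrow> 'r \<Rightarrow> 'r) \<Rightarrow> ('f \<Rightarrow> 'f \<Rightarrow> 'f) \<Rightarrow> ('e \<Rightarrow> 'f) \<Rightarrow> bool" where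
  "lie_algebroid_morphism smE anchorE brkE smF anchorF brkF phi \<longleftrightarrow>
     module_hom smE smF phi \<and>
     (\<forall>e. anchorF (phi e) = anchorE e) \<and>
     (\<forall>e1 e2. phi (brkE e1 e2) = brkF (phi e1) (phi e2))"

end

theory Submission
  imports Defs
begin

(* Each Lie algebroid axiom for C, and each morphism property of dA and dB, follows from only a
   few of the hypotheses, so the file proves them one at a time under exactly those hypotheses:
   - skew-symmetry is condition (M2);
   - additivity and the Leibniz rule come from the connection axioms and C-infinity-linearity of dB;
   - dA and dB intertwine the brackets by (M3), resp. (M4) and skew-symmetry of [.,.]_B;
   - the Jacobi identity is the one real computation: expanding both sides, the curvature
     identities of the two 2-representations, (M6) and (M2)/(M4) make all terms cancel;
   - the anchor rho_A o dA is a bracket morphism because dA is one and rho_A is. *)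

definition matched_bracket ::
  "('a \<Rightarrow> 'c \<Rightarrow> 'c) \<Rightarrow> ('b \<Rightarrow> 'c \<Rightarrow> 'c) \<Rightarrow> ('c \<Rightarrow> 'a) \<Rightarrow> ('c \<Rightarrow> 'b) \<Rightarrow> 'c \<Rightarrow> 'c \<Rightarrow> 'c::ab_group_add"
  where "matched_bracket nAC nBC dA dB c1 c2 = nAC (dA c1) c2 - nBC (dB c2) c1"

lemma module_homD:
  assumes "module_hom smE smF phi"
  shows "additive phi" and "phi (smE f x) = smF f (phi x)"
  using assms unfolding module_hom_def additive_def by auto

lemma is_connectionD:
  assumes "is_connection smA anchorA smV nabla"
  shows "nabla (a1 + a2) v = nabla a1 v + nabla a2 v"
    and "nabla (smA f a) v = smV f (nabla a v)"
    and "nabla a (v + w) = nabla a v + nabla a w"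
    and "nabla a (smV f v) = smV f (nabla a v) + smV (anchorA a f) v"
  using assms unfolding is_connection_def by blast+

lemma lie_algebroidD:
  assumes "lie_algebroid sm anchor brk"
  shows "is_vector_field (anchor e)"
    and "anchor (e1 + e2) f = anchor e1 f + anchor e2 f"
    and "anchor (sm g e) f = g * anchor e f"
    and "brk e1 e2 = - brk e2 e1"
    and "anchor (brk e1 e2) = vf_bracket (anchor e1) (anchor e2)"
  using assms unfolding lie_algebroid_def by blast+

lemma two_representationD:
  assumes "two_representation smA anchorA brkA smB smC dB nAB nAC RA"
  shows "module_over smC" and "module_hom smC smB dB"
    and "is_connection smA anchorA smC nAC"
    and "dB (nAC a c) = nAB a (dB c)"
    and "curvature brkA nAC a1 a2 c = RA a1 a2 (dB c)"
  using assms unfolding two_representation_def by blast+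

lemma matched_pairD:
  assumes "matched_pair anchorA brkA anchorB brkB dA dB nAB nAC RA nBA nBC RB"
  shows "anchorA (dA c) = anchorB (dB c)"
    and "nAC (dA c1) c2 - nBC (dB c2) c1 = - nAC (dA c2) c1 + nBC (dB c1) c2"
    and "brkA a (dA c) = dA (nAC a c) - nBA (dB c) a"
    and "brkB b (dB c) = dB (nBC b c) - nAB (dA c) b"
    and "nBC b (nAC a c) - nAC a (nBC b c) - nAC (nBA b a) c + nBC (nAB a b) c
                  = RB b (dB c) a - RA a (dA c) b"
  using assms unfolding matched_pair_def by metis+

lemma matched_bracket_skew:
  assumes "\<And>c1 c2. nAC (dA c1) c2 - nBC (dB c2) c1 = - nAC (dA c2) c1 + nBC (dB c1) c2"
  shows "matched_bracket nAC nBC dA dB c1 c2 = - matched_bracket nAC nBC dA dB c2 c1"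
  using assms[of c1 c2] unfolding matched_bracket_def by (simp add: algebra_simps)

lemma matched_bracket_add_left:
  assumes "additive dA"
    and "\<And>a1 a2 c. nAC (a1 + a2) c = nAC a1 c + nAC a2 c"
    and "\<And>b c1 c2. nBC b (c1 + c2) = nBC b c1 + nBC b c2"
  shows "matched_bracket nAC nBC dA dB (c1 + c2) c3
           = matched_bracket nAC nBC dA dB c1 c3 + matched_bracket nAC nBC dA dB c2 c3"
  using assms unfolding matched_bracket_def additive_def by (simp add: algebra_simps)

text \<open>Leibniz rule: nAC contributes the anchor term, while nBC is tensorial in its direction
  and dB is C-infinity-linear, so the second summand contributes none.\<close>

lemma matched_bracket_leibniz:
  assumes "module_over smC" and "module_hom smC smB dB"
    and "is_connection smA anchorA smC nAC" and "is_connection smB anchorB smC nBC"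
  shows "matched_bracket nAC nBC dA dB c1 (smC f c2)
           = smC f (matched_bracket nAC nBC dA dB c1 c2) + smC (anchorA (dA c1) f) c2"
proof -
  have "additive (smC f)"
    using assms(1) unfolding module_over_def additive_def by auto
  then show ?thesis
    unfolding matched_bracket_def
    by (simp add: additive.diff is_connectionD(2,4)[OF assms(3)] is_connectionD(2)[OF assms(4)]
        module_homD(2)[OF assms(2)] algebra_simps)
qed

lemma dA_matched_bracket:
  assumes "additive dA"
    and "\<And>b c. dA (nBC b c) = nBA b (dA c)"
    and "\<And>a c. brkA a (dA c) = dA (nAC a c) - nBA (dB c) a"
  shows "dA (matched_bracket nAC nBC dA dB c1 c2) = brkA (dA c1) (dA c2)"
  unfolding matched_bracket_def additive.diff[OF assms(1)] assms(2) assms(3) by simp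

lemma dB_matched_bracket:
  assumes "additive dB"
    and "\<And>a c. dB (nAC a c) = nAB a (dB c)"
    and "\<And>b c. brkB b (dB c) = dB (nBC b c) - nAB (dA c) b"
    and "\<And>b1 b2. brkB b1 b2 = - brkB b2 b1"
  shows "dB (matched_bracket nAC nBC dA dB c1 c2) = brkB (dB c1) (dB c2)"
proof -
  have "dB (nBC (dB c2) c1) = brkB (dB c2) (dB c1) + nAB (dA c1) (dB c2)"
    using assms(3)[of "dB c2" c1] by (simp add: algebra_simps)
  then show ?thesis
    unfolding matched_bracket_def additive.diff[OF assms(1)] assms(2)
    using assms(4)[of "dB c2" "dB c1"] by simp
qed

text \<open>Both sides are expanded into iterated covariant derivatives
  (lhs, rhs1, rhs2); the terms are matched up using the curvature identities of the two
  2-representations (curv_AC, curv_BC), the compatibility (M6) of the two C-connections (M6_c2),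
  and (M2) applied to the auxiliary section c' = nabla_{dB c3} c1, whose images under dA and dB
  are known from the 2-representation of B and from (M4) (M2_c').\<close>

lemma matched_bracket_jacobi:
  fixes RA :: "'a::ab_group_add \<Rightarrow> 'a \<Rightarrow> 'b::ab_group_add \<Rightarrow> 'c::ab_group_add"
    and RB :: "'b \<Rightarrow> 'b \<Rightarrow> 'a \<Rightarrow> 'c"
    and nAC :: "'a \<Rightarrow> 'c \<Rightarrow> 'c" and nBC :: "'b \<Rightarrow> 'c \<Rightarrow> 'c"
    and dA :: "'c \<Rightarrow> 'a" and dB :: "'c \<Rightarrow> 'b"
  defines "brkC \<equiv> matched_bracket nAC nBC dA dB"
  assumes nAC_add: "\<And>a c1 c2. nAC a (c1 + c2) = nAC a c1 + nAC a c2"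
    and nBC_add1: "\<And>b1 b2 c. nBC (b1 + b2) c = nBC b1 c + nBC b2 c"
    and nBC_add2: "\<And>b c1 c2. nBC b (c1 + c2) = nBC b c1 + nBC b c2"
    and skewB: "\<And>b1 b2. brkB b1 b2 = - brkB b2 b1"
    and curvAC: "\<And>a1 a2 c. curvature brkA nAC a1 a2 c = RA a1 a2 (dB c)"
    and curvBC: "\<And>b1 b2 c. curvature brkB nBC b1 b2 c = RB b1 b2 (dA c)"
    and dA_nBC: "\<And>b c. dA (nBC b c) = nBA b (dA c)"
    and M2: "\<And>c1 c2. nAC (dA c1) c2 - nBC (dB c2) c1 = - nAC (dA c2) c1 + nBC (dB c1) c2"
    and M4: "\<And>b c. brkB b (dB c) = dB (nBC b c) - nAB (dA c) b"
    and M6: "\<And>a b c. nBC b (nAC a c) - nAC a (nBC b c) - nAC (nBA b a) c + nBC (nAB a b) c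
                       = RB b (dB c) a - RA a (dA c) b"
    and dA_brk: "\<And>c1 c2. dA (brkC c1 c2) = brkA (dA c1) (dA c2)"
    and dB_brk: "\<And>c1 c2. dB (brkC c1 c2) = brkB (dB c1) (dB c2)"
  shows "brkC c1 (brkC c2 c3) = brkC (brkC c1 c2) c3 + brkC c2 (brkC c1 c3)"
proof -
  have nAC_diff: "nAC a (x - y) = nAC a x - nAC a y" for a x y
    by (rule additive.diff) (simp add: additive_def nAC_add)
  have nBC_diff: "nBC b (x - y) = nBC b x - nBC b y" for b x y
    by (rule additive.diff) (simp add: additive_def nBC_add2)
  have nBC_minus: "nBC (- b) c = - nBC b c" for b c
    using additive.minus[of "\<lambda>b. nBC b c"] by (simp add: additive_def nBC_add1)
  define c' where "c' = nBC (dB c3) c1"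
  have lhs: "brkC c1 (brkC c2 c3) = nAC (dA c1) (nAC (dA c2) c3) - nAC (dA c1) (nBC (dB c3) c2)
            - nBC (brkB (dB c2) (dB c3)) c1"
    using dB_brk[of c2 c3] unfolding brkC_def matched_bracket_def nAC_diff by simp
  have rhs1: "brkC (brkC c1 c2) c3 = nAC (brkA (dA c1) (dA c2)) c3 - nBC (dB c3) (nAC (dA c1) c2)
            + nBC (dB c3) (nBC (dB c2) c1)"
    using dA_brk[of c1 c2] unfolding brkC_def matched_bracket_def by (simp add: nBC_diff)
  have rhs2: "brkC c2 (brkC c1 c3) = nAC (dA c2) (nAC (dA c1) c3) - nAC (dA c2) c'
            - nBC (brkB (dB c1) (dB c3)) c2"
    using dB_brk[of c1 c3] unfolding brkC_def matched_bracket_def nAC_diff c'_def by simp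
  have curv_AC: "nAC (dA c1) (nAC (dA c2) c3) = RA (dA c1) (dA c2) (dB c3)
            + nAC (dA c2) (nAC (dA c1) c3) + nAC (brkA (dA c1) (dA c2)) c3"
    using curvAC[of "dA c1" "dA c2" c3] unfolding curvature_def by (simp add: algebra_simps)
  have M6_c2: "nBC (dB c3) (nAC (dA c1) c2) = RB (dB c3) (dB c2) (dA c1) - RA (dA c1) (dA c2) (dB c3)
            + nAC (dA c1) (nBC (dB c3) c2) + nAC (nBA (dB c3) (dA c1)) c2
            - nBC (nAB (dA c1) (dB c3)) c2"
    using M6[of "dB c3" "dA c1" c2] by (simp add: algebra_simps)
  have curv_BC: "nBC (dB c3) (nBC (dB c2) c1) = RB (dB c3) (dB c2) (dA c1) + nBC (dB c2) c'
            - nBC (brkB (dB c2) (dB c3)) c1"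
    using curvBC[of "dB c3" "dB c2" c1] skewB[of "dB c3" "dB c2"] nBC_minus
    unfolding curvature_def c'_def by (simp add: algebra_simps)
  have dB_c': "dB c' = brkB (dB c3) (dB c1) + nAB (dA c1) (dB c3)"
    using M4[of "dB c3" c1] unfolding c'_def by (simp add: algebra_simps)
  have dA_c': "dA c' = nBA (dB c3) (dA c1)"
    unfolding c'_def by (rule dA_nBC)
  have M2_c': "nAC (dA c2) c' = - nBC (brkB (dB c1) (dB c3)) c2 + nBC (nAB (dA c1) (dB c3)) c2
            - nAC (nBA (dB c3) (dA c1)) c2 + nBC (dB c2) c'"
    using M2[of c2 c'] skewB[of "dB c3" "dB c1"] nBC_minus
    unfolding dB_c' dA_c' nBC_add1 by (simp add: algebra_simps)
  show ?thesis
    unfolding lhs rhs1 rhs2 curv_AC M6_c2 curv_BC M2_c' by (simp add: algebra_simps)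
qed

lemma matched_pair_bracket_intertwining:
  assumes LB: "lie_algebroid smB anchorB brkB"
    and RepA: "two_representation smA anchorA brkA smB smC dB nAB nAC RA"
    and RepB: "two_representation smB anchorB brkB smA smC dA nBA nBC RB"
    and MP: "matched_pair anchorA brkA anchorB brkB dA dB nAB nAC RA nBA nBC RB"
  shows "dA (matched_bracket nAC nBC dA dB c1 c2) = brkA (dA c1) (dA c2)"
    and "dB (matched_bracket nAC nBC dA dB c1 c2) = brkB (dB c1) (dB c2)"
proof -
  show "dA (matched_bracket nAC nBC dA dB c1 c2) = brkA (dA c1) (dA c2)"
    by (rule dA_matched_bracket; rule module_homD(1)[OF two_representationD(2)[OF RepB]]
          two_representationD(4)[OF RepB] matched_pairD(3)[OF MP])
  show "dB (matched_bracket nAC nBC dA dB c1 c2) = brkB (dB c1) (dB c2)"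
    by (rule dB_matched_bracket; rule module_homD(1)[OF two_representationD(2)[OF RepA]]
          two_representationD(4)[OF RepA] matched_pairD(4)[OF MP] lie_algebroidD(4)[OF LB])
qed

lemma matched_pair_lie_algebroid:
  assumes LA: "lie_algebroid smA anchorA brkA"
    and LB: "lie_algebroid smB anchorB brkB"
    and RepA: "two_representation smA anchorA brkA smB smC dB nAB nAC RA"
    and RepB: "two_representation smB anchorB brkB smA smC dA nBA nBC RB"
    and MP: "matched_pair anchorA brkA anchorB brkB dA dB nAB nAC RA nBA nBC RB"
  shows "lie_algebroid smC (\<lambda>c. anchorA (dA c)) (matched_bracket nAC nBC dA dB)"
proof -
  note conA = is_connectionD[OF two_representationD(3)[OF RepA]]
  note conB = is_connectionD[OF two_representationD(3)[OF RepB]]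
  note dA_hom = module_homD[OF two_representationD(2)[OF RepB]]
  note intertwine = matched_pair_bracket_intertwining[OF LB RepA RepB MP]
  show ?thesis
    unfolding lie_algebroid_def
  proof (intro conjI allI)
    show "module_over smC"
      by (rule two_representationD(1)[OF RepA])
    show "is_vector_field (anchorA (dA c))" for c
      by (rule lie_algebroidD(1)[OF LA])
    show "anchorA (dA (c1 + c2)) f = anchorA (dA c1) f + anchorA (dA c2) f" for c1 c2 f
      by (simp add: additive.add[OF dA_hom(1)] lie_algebroidD(2)[OF LA])
    show "anchorA (dA (smC g c)) f = g * anchorA (dA c) f" for g c f
      by (simp add: dA_hom(2) lie_algebroidD(3)[OF LA])
    show "matched_bracket nAC nBC dA dB (c1 + c2) c3
            = matched_bracket nAC nBC dA dB c1 c3 + matched_bracket nAC nBC dA dB c2 c3" for c1 c2 c3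
      by (rule matched_bracket_add_left; rule dA_hom(1) conA(1) conB(3))
    show "matched_bracket nAC nBC dA dB c1 c2 = - matched_bracket nAC nBC dA dB c2 c1" for c1 c2
      by (rule matched_bracket_skew; rule matched_pairD(2)[OF MP])
    show "matched_bracket nAC nBC dA dB c1 (matched_bracket nAC nBC dA dB c2 c3)
            = matched_bracket nAC nBC dA dB (matched_bracket nAC nBC dA dB c1 c2) c3
              + matched_bracket nAC nBC dA dB c2 (matched_bracket nAC nBC dA dB c1 c3)" for c1 c2 c3
      by (rule matched_bracket_jacobi; rule conA(3) conB(1,3) lie_algebroidD(4)[OF LB]
            two_representationD(4,5)[OF RepB] two_representationD(5)[OF RepA]
            matched_pairD(2,4,5)[OF MP] intertwine)
    show "matched_bracket nAC nBC dA dB c1 (smC f c2)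
            = smC f (matched_bracket nAC nBC dA dB c1 c2) + smC (anchorA (dA c1) f) c2" for c1 c2 f
      by (rule matched_bracket_leibniz; rule two_representationD(1-3)[OF RepA]
            two_representationD(3)[OF RepB])
    show "anchorA (dA (matched_bracket nAC nBC dA dB c1 c2))
            = vf_bracket (anchorA (dA c1)) (anchorA (dA c2))" for c1 c2
      by (simp add: intertwine(1) lie_algebroidD(5)[OF LA])
  qed
qed

theorem mainTheorem2:
  fixes smA :: "'r::{comm_ring_1,real_algebra_1} \<Rightarrow> 'a::ab_group_add \<Rightarrow> 'a"
    and smB :: "'r \<Rightarrow> 'b::ab_group_add \<Rightarrow> 'b"
    and smC :: "'r \<Rightarrow> 'c::ab_group_add \<Rightarrow> 'c"
    and anchorA :: "'a \<Rightarrow> 'r \<Rightarrow> 'r" and brkA :: "'a \<Rightarrow> 'a \<Rightarrow> 'a"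
    and anchorB :: "'b \<Rightarrow> 'r \<Rightarrow> 'r" and brkB :: "'b \<Rightarrow> 'b \<Rightarrow> 'b"
    and dA :: "'c \<Rightarrow> 'a" and dB :: "'c \<Rightarrow> 'b"
    and nAB :: "'a \<Rightarrow> 'b \<Rightarrow> 'b" and nAC :: "'a \<Rightarrow> 'c \<Rightarrow> 'c" and RA :: "'a \<Rightarrow> 'a \<Rightarrow> 'b \<Rightarrow> 'c"
    and nBA :: "'b \<Rightarrow> 'a \<Rightarrow> 'a" and nBC :: "'b \<Rightarrow> 'c \<Rightarrow> 'c" and RB :: "'b \<Rightarrow> 'b \<Rightarrow> 'a \<Rightarrow> 'c"
  assumes "lie_algebroid smA anchorA brkA"
    and "lie_algebroid smB anchorB brkB"
    and "two_representation smA anchorA brkA smB smC dB nAB nAC RA"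
    and "two_representation smB anchorB brkB smA smC dA nBA nBC RB"
    and "matched_pair anchorA brkA anchorB brkB dA dB nAB nAC RA nBA nBC RB"
  shows "lie_algebroid smC (\<lambda>c. anchorA (dA c)) (\<lambda>c1 c2. nAC (dA c1) c2 - nBC (dB c2) c1)
       \<and> (\<forall>c. anchorA (dA c) = anchorB (dB c))
       \<and> lie_algebroid_morphism smC (\<lambda>c. anchorA (dA c)) (\<lambda>c1 c2. nAC (dA c1) c2 - nBC (dB c2) c1)
           smA anchorA brkA dA
       \<and> lie_algebroid_morphism smC (\<lambda>c. anchorA (dA c)) (\<lambda>c1 c2. nAC (dA c1) c2 - nBC (dB c2) c1)
           smB anchorB brkB dB"
proof -
  have bracket_C: "(\<lambda>c1 c2. nAC (dA c1) c2 - nBC (dB c2) c1) = matched_bracket nAC nBC dA dB"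
    by (simp add: fun_eq_iff matched_bracket_def)
  have anchor_C: "\<forall>c. anchorA (dA c) = anchorB (dB c)"
    using matched_pairD(1)[OF assms(5)] by blast
  note intertwine = matched_pair_bracket_intertwining[OF assms(2-5)]
  have "lie_algebroid_morphism smC (\<lambda>c. anchorA (dA c)) (matched_bracket nAC nBC dA dB)
          smA anchorA brkA dA"
    using two_representationD(2)[OF assms(4)] intertwine(1)
    unfolding lie_algebroid_morphism_def by blast
  moreover have "lie_algebroid_morphism smC (\<lambda>c. anchorA (dA c)) (matched_bracket nAC nBC dA dB)
          smB anchorB brkB dB"
    using two_representationD(2)[OF assms(3)] intertwine(2) anchor_C
    unfolding lie_algebroid_morphism_def by simp
  ultimately show ?thesis
    unfolding bracket_C using matched_pair_lie_algebroid[OF assms] anchor_C by blast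
qed

end
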